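(* Let $N$ be a continuous fuzzy negation, $U$ a disjunctive uninorm with neutral element $e\in\,]0,1[$, and $I(x,y)=U(N(x),y)$ for $x,y\in[0,1]$. Then the representation of $I$ as a $(U,N)$-implication with a continuous fuzzy negation is not unique if and only if there exists $\alpha\in\,]0,1[$ with $\alpha\neq e$ such that the function $f=U(\cdot,\alpha)$ is continuous and non-decreasing with $f(0)=0$ and $f(1)=1$.
   Context: A fuzzy negation is a non-increasing map $N:[0,1]\to[0,1]$ with $N(0)=1$, $N(1)=0$. A uninorm is a map $U:[0,1]^2\to[0,1]$ that is commutative, associative, non-decreasing in each variable, and has a neutral element $e\in[0,1]$. A uninorm is disjunctive if $U(1,0)=1$. A representation of $I$ as a $(U,N)$-implication with a continuous fuzzy negation is a pair $(U',N')$ with $U'$ a disjunctive uninorm with neutral element in $]0,1[$ and $N'$ a continuous fuzzy negation such that $I(x,y)=U'(N'(x),y)$ for all $x,y\in[0,1]$; the representation is unique if $(U,N)$ is the only such pair. *)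

theory Defs
  imports Complex_Main
begin

(* All maps are modelled as real functions; only their values on [0,1] matter. *)

definition fuzzy_negation :: "(real \<Rightarrow> real) \<Rightarrow> bool" where
  "fuzzy_negation N \<longleftrightarrow>
     (\<forall>x\<in>{0..1}. N x \<in> {0..1}) \<and>
     (\<forall>x\<in>{0..1}. \<forall>y\<in>{0..1}. x \<le> y \<longrightarrow> N y \<le> N x) \<and>
     N 0 = 1 \<and> N 1 = 0"

definition uninorm :: "(real \<Rightarrow> real \<Rightarrow> real) \<Rightarrow> real \<Rightarrow> bool" where
  "uninorm U e \<longleftrightarrow>
     e \<in> {0..1} \<and>
     (\<forall>x\<in>{0..1}. \<forall>y\<in>{0..1}. U x y \<in> {0..1}) \<and>
     (\<forall>x\<in>{0..1}. \<forall>y\<in>{0..1}. U x y = U y x) \<and>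
     (\<forall>x\<in>{0..1}. \<forall>y\<in>{0..1}. \<forall>z\<in>{0..1}. U (U x y) z = U x (U y z)) \<and>
     (\<forall>x\<in>{0..1}. \<forall>x'\<in>{0..1}. \<forall>y\<in>{0..1}. x \<le> x' \<longrightarrow> U x y \<le> U x' y) \<and>
     (\<forall>x\<in>{0..1}. U e x = x)"

definition disjunctive :: "(real \<Rightarrow> real \<Rightarrow> real) \<Rightarrow> bool" where
  "disjunctive U \<longleftrightarrow> U 1 0 = 1"

definition UN_representation ::
  "(real \<Rightarrow> real \<Rightarrow> real) \<Rightarrow> (real \<Rightarrow> real \<Rightarrow> real) \<Rightarrow> (real \<Rightarrow> real) \<Rightarrow> bool" where
  "UN_representation I U N \<longleftrightarrow>
     (\<exists>e\<in>{0<..<1}. uninorm U e) \<and> disjunctive U \<and>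
     fuzzy_negation N \<and> continuous_on {0..1} N \<and>
     (\<forall>x\<in>{0..1}. \<forall>y\<in>{0..1}. I x y = U (N x) y)"

definition unique_UN_representation ::
  "(real \<Rightarrow> real \<Rightarrow> real) \<Rightarrow> (real \<Rightarrow> real \<Rightarrow> real) \<Rightarrow> (real \<Rightarrow> real) \<Rightarrow> bool" where
  "unique_UN_representation I U N \<longleftrightarrow>
     UN_representation I U N \<and>
     (\<forall>U' N'. UN_representation I U' N' \<longrightarrow>
        (\<forall>x\<in>{0..1}. \<forall>y\<in>{0..1}. U' x y = U x y) \<and> (\<forall>x\<in>{0..1}. N' x = N x))"

end

theory Submission
  imports Defs
begin

(* If (U',N') is another representation and U' has neutral element a, then evaluating
   I(x,a) gives N' = U(N(.),a). Hence U(.,a) maps [0,1] monotonically onto [0,1] and is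
   therefore continuous; moreover a <> e, since a = e would force N' = N and then, N being
   onto, U' = U.
   Conversely, given such an a, the intermediate value theorem provides b with U(a,b) = e,
   and U'(x,y) = U(U(x,y),b), N' = U(N(.),a) is a second representation: U' is a disjunctive
   uninorm with neutral element a, and U'(U(z,a),y) = U(z,y). *)

lemma continuous_on_mono_onto_interval:
  fixes f :: "real \<Rightarrow> real"
  assumes mono: "mono_on {a..b} f" and onto: "{f a..f b} \<subseteq> f ` {a..b}"
  shows "continuous_on {a..b} f"
proof (cases "a \<le> b")
  case True
  \<comment> \<open>Extending f by translations outside [a,b] gives a monotone surjection of the reals.\<close>
  define g where
    "g x = (if x < a then f a + (x - a) else if b < x then f b + (x - b) else f x)" for x
  have bounds: "f a \<le> f x" "f x \<le> f b" if "x \<in> {a..b}" for x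
    using mono_onD[OF mono, of a x] mono_onD[OF mono, of x b] that True by auto
  have "g x \<le> g y" if "x \<le> y" for x y
    using bounds[of x] bounds[of y] bounds[of a] mono_onD[OF mono, of x y] True that
    unfolding g_def by auto
  moreover have "surj g"
    unfolding surj_def
  proof
    fix z :: real
    consider "z < f a" | "f b < z" | "z \<in> {f a..f b}" by fastforce
    then show "\<exists>x. z = g x"
    proof cases
      case 1
      then show ?thesis by (intro exI[of _ "a + (z - f a)"]) (auto simp: g_def)
    next
      case 2
      with bounds[of a] True show ?thesis
        by (intro exI[of _ "b + (z - f b)"]) (auto simp: g_def)
    next
      case 3
      then obtain x where "x \<in> {a..b}" "z = f x" using onto by blast
      then show ?thesis by (intro exI[of _ x]) (auto simp: g_def)
    qed
  qed
  ultimately have "continuous_on UNIV g"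
    by (intro continuous_onI_mono) simp_all
  then have "continuous_on {a..b} g"
    by (rule continuous_on_subset) simp
  then show ?thesis
    by (rule continuous_on_cong[THEN iffD1, OF refl, rotated]) (simp add: g_def)
qed simp

lemma fuzzy_negation_image:
  assumes "fuzzy_negation N" "continuous_on {0..1} N"
  shows "N ` {0..1} = {0..1}"
proof
  show "N ` {0..1} \<subseteq> {0..1}"
    using assms(1) unfolding fuzzy_negation_def by blast
  have "N 0 = 1" "N 1 = 0"
    using assms(1) unfolding fuzzy_negation_def by auto
  then show "{0..1} \<subseteq> N ` {0..1}"
    using IVT2'[of N 1 _ 0] assms(2) by force
qed

lemma fuzzy_negation_comp:
  assumes "fuzzy_negation N" "mono_on {0..1} f" "f ` {0..1} \<subseteq> {0..1}" "f 0 = 0" "f 1 = 1"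
  shows "fuzzy_negation (f \<circ> N)"
  using assms mono_onD[OF assms(2)] unfolding fuzzy_negation_def by (auto simp: image_subset_iff)

locale unit_uninorm =
  fixes U :: "real \<Rightarrow> real \<Rightarrow> real" and e :: real
  assumes uninorm: "uninorm U e"
begin

lemma neutral_mem: "e \<in> {0..1}"
  using uninorm unfolding uninorm_def by blast

lemma closed: "x \<in> {0..1} \<Longrightarrow> y \<in> {0..1} \<Longrightarrow> U x y \<in> {0..1}"
  using uninorm unfolding uninorm_def by blast

lemma commute: "x \<in> {0..1} \<Longrightarrow> y \<in> {0..1} \<Longrightarrow> U x y = U y x"
  using uninorm unfolding uninorm_def by blast

lemma assoc: "x \<in> {0..1} \<Longrightarrow> y \<in> {0..1} \<Longrightarrow> z \<in> {0..1} \<Longrightarrow> U (U x y) z = U x (U y z)"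
  using uninorm unfolding uninorm_def by blast

lemma left_commute: "x \<in> {0..1} \<Longrightarrow> y \<in> {0..1} \<Longrightarrow> z \<in> {0..1} \<Longrightarrow> U x (U y z) = U y (U x z)"
  by (metis assoc commute)

lemma mono_left: "x \<in> {0..1} \<Longrightarrow> x' \<in> {0..1} \<Longrightarrow> y \<in> {0..1} \<Longrightarrow> x \<le> x' \<Longrightarrow> U x y \<le> U x' y"
  using uninorm unfolding uninorm_def by blast

lemma left_neutral: "x \<in> {0..1} \<Longrightarrow> U e x = x"
  using uninorm unfolding uninorm_def by blast

lemma right_neutral: "x \<in> {0..1} \<Longrightarrow> U x e = x"
  using commute left_neutral neutral_mem by metis

lemmas ac = assoc commute left_commute
  \<comment> \<open>simp discharges their side conditions via closed only while they read x \<in> {0..1},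
    so proofs using them delete atLeastAtMost_iff.\<close>

lemma translate_shift:
  assumes "a \<in> {0..1}" "b \<in> {0..1}" "U a b = e" "x \<in> {0..1}" "y \<in> {0..1}"
  shows "U (U (U x a) y) b = U x y"
proof -
  have "U (U (U x a) y) b = U (U x y) (U a b)"
    using assms(1,2,4,5) by (simp add: closed ac del: atLeastAtMost_iff)
  then show ?thesis
    using assms closed right_neutral by simp
qed

lemma translate_uninorm:
  assumes "a \<in> {0..1}" "b \<in> {0..1}" "U a b = e"
  shows "uninorm (\<lambda>x y. U (U x y) b) a"
  unfolding uninorm_def
proof (intro conjI ballI impI)
  fix x y z x' :: real
  assume x: "x \<in> {0..1}" and y: "y \<in> {0..1}" and z: "z \<in> {0..1}" and x': "x' \<in> {0..1}"
  show "U (U x y) b \<in> {0..1}"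
    using x y assms(2) by (simp add: closed del: atLeastAtMost_iff)
  show "U (U x y) b = U (U y x) b"
    using x y commute by simp
  show "U (U (U (U x y) b) z) b = U (U x (U (U y z) b)) b"
    using x y z assms(2) by (simp add: closed ac del: atLeastAtMost_iff)
  show "x \<le> x' \<Longrightarrow> U (U x y) b \<le> U (U x' y) b"
    using x y x' assms(2) by (simp add: closed mono_left del: atLeastAtMost_iff)
  show "U (U a x) b = x"
    using translate_shift[OF assms neutral_mem x] assms(1) x by (simp add: left_neutral)
qed (use assms(1) in simp)

lemma translate_disjunctive:
  assumes "disjunctive U" "U 1 a = 1" "a \<in> {0..1}" "b \<in> {0..1}" "U a b = e"
  shows "disjunctive (\<lambda>x y. U (U x y) b)"
proof -
  have "U 1 b = U (U (U 1 a) e) b"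
    using assms(2) neutral_mem right_neutral by simp
  also have "\<dots> = 1"
    using translate_shift[OF assms(3-5)] neutral_mem right_neutral by simp
  finally show ?thesis
    using assms(1) unfolding disjunctive_def by simp
qed

end

lemma UN_representation_negation_eq:
  assumes "UN_representation I U' N'" "uninorm U' e'"
    and I: "\<forall>x\<in>{0..1}. \<forall>y\<in>{0..1}. I x y = U (N x) y" and x: "x \<in> {0..1}"
  shows "N' x = U (N x) e'"
proof -
  interpret U': unit_uninorm U' e' by (fact unit_uninorm.intro[OF assms(2)])
  have "N' x \<in> {0..1}"
    using assms(1) x unfolding UN_representation_def fuzzy_negation_def by blast
  then have "N' x = I x e'"
    using assms(1) x U'.neutral_mem U'.right_neutral unfolding UN_representation_def by simp
  also have "\<dots> = U (N x) e'"
    using I x U'.neutral_mem by simp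
  finally show ?thesis .
qed

lemma UN_representation_eq_if_negation_eq:
  assumes rep: "UN_representation I U N" and rep': "UN_representation I U' N'"
    and N'_eq: "\<forall>x\<in>{0..1}. N' x = N x" and x: "x \<in> {0..1}" and y: "y \<in> {0..1}"
  shows "U' x y = U x y"
proof -
  have "N ` {0..1} = {0..1}"
    using rep fuzzy_negation_image unfolding UN_representation_def by blast
  then obtain z where z: "z \<in> {0..1}" "x = N z"
    using x by blast
  then have "U' x y = I z y"
    using rep' N'_eq y unfolding UN_representation_def by simp
  also have "\<dots> = U x y"
    using rep z y unfolding UN_representation_def by simp
  finally show ?thesis .
qed

lemma not_unique_UN_representation_obtains_other_neutral:
  assumes rep: "UN_representation I U N" and "uninorm U e"
    and "\<not> unique_UN_representation I U N"
  obtains \<alpha> where "\<alpha> \<in> {0<..<1}" "\<alpha> \<noteq> e"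
    "continuous_on {0..1} (\<lambda>x. U x \<alpha>)" "mono_on {0..1} (\<lambda>x. U x \<alpha>)"
    "U 0 \<alpha> = 0" "U 1 \<alpha> = 1"
proof -
  interpret unit_uninorm U e by (fact unit_uninorm.intro[OF assms(2)])
  obtain U' N' where rep': "UN_representation I U' N'"
    and differ: "\<not> ((\<forall>x\<in>{0..1}. \<forall>y\<in>{0..1}. U' x y = U x y) \<and> (\<forall>x\<in>{0..1}. N' x = N x))"
    using assms(1,3) unfolding unique_UN_representation_def by blast
  then obtain \<alpha> where \<alpha>: "\<alpha> \<in> {0<..<1}" "uninorm U' \<alpha>"
    unfolding UN_representation_def by blast
  have N: "fuzzy_negation N" "continuous_on {0..1} N"
    and N': "fuzzy_negation N'" "continuous_on {0..1} N'"
    and I: "\<forall>x\<in>{0..1}. \<forall>y\<in>{0..1}. I x y = U (N x) y"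
    using rep rep' unfolding UN_representation_def by blast+
  have N'_eq: "N' x = U (N x) \<alpha>" if "x \<in> {0..1}" for x
    using UN_representation_negation_eq[OF rep' \<alpha>(2), of U N] I that by blast
  have "\<alpha> \<noteq> e"
  proof
    assume "\<alpha> = e"
    then have "\<forall>x\<in>{0..1}. N' x = N x"
      using N'_eq N(1) right_neutral unfolding fuzzy_negation_def by simp
    with UN_representation_eq_if_negation_eq[OF rep rep'] differ show False
      by blast
  qed
  moreover have "mono_on {0..1} (\<lambda>x. U x \<alpha>)"
    using \<alpha>(1) mono_left by (auto intro!: mono_onI)
  moreover have "U 0 \<alpha> = 0" "U 1 \<alpha> = 1"
    using N'_eq[of 0] N'_eq[of 1] N(1) N'(1) unfolding fuzzy_negation_def by auto
  moreover have "{0..1} \<subseteq> (\<lambda>x. U x \<alpha>) ` {0..1}"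
  proof -
    have "{0..1} = N' ` {0..1}"
      using fuzzy_negation_image[OF N'] by simp
    also have "\<dots> = (\<lambda>x. U x \<alpha>) ` N ` {0..1}"
      using N'_eq by (simp add: image_image)
    finally show ?thesis
      using fuzzy_negation_image[OF N] by simp
  qed
  ultimately show thesis
    using that \<alpha>(1) continuous_on_mono_onto_interval[of 0 1 "\<lambda>x. U x \<alpha>"] by simp
qed

lemma other_neutral_imp_not_unique_UN_representation:
  assumes rep: "UN_representation I U N" and "uninorm U e"
    and \<alpha>: "\<alpha> \<in> {0<..<1}" "\<alpha> \<noteq> e" "continuous_on {0..1} (\<lambda>x. U x \<alpha>)"
      "U 0 \<alpha> = 0" "U 1 \<alpha> = 1"
  shows "\<not> unique_UN_representation I U N"
proof -
  interpret unit_uninorm U e by (fact unit_uninorm.intro[OF assms(2)])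
  have \<alpha>01: "\<alpha> \<in> {0..1}"
    using \<alpha>(1) by simp
  obtain \<beta> where \<beta>: "\<beta> \<in> {0..1}" "U \<alpha> \<beta> = e"
    using IVT'[of "\<lambda>x. U x \<alpha>" 0 e 1] \<alpha>(3-5) \<alpha>01 neutral_mem commute by fastforce
  have N: "fuzzy_negation N" "continuous_on {0..1} N"
    and I: "\<forall>x\<in>{0..1}. \<forall>y\<in>{0..1}. I x y = U (N x) y"
    using rep unfolding UN_representation_def by blast+
  define U' where "U' = (\<lambda>x y. U (U x y) \<beta>)"
  define N' where "N' = (\<lambda>x. U x \<alpha>) \<circ> N"
  have "uninorm U' \<alpha>"
    unfolding U'_def using translate_uninorm \<alpha>01 \<beta> .
  moreover have "disjunctive U'"
    unfolding U'_def using rep \<alpha>(5) \<alpha>01 \<beta> translate_disjunctive unfolding UN_representation_def by blast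
  moreover have "fuzzy_negation N'"
    unfolding N'_def using \<alpha>(4,5) \<alpha>01 closed mono_left
    by (intro fuzzy_negation_comp[OF N(1)]) (auto intro!: mono_onI)
  moreover have "continuous_on {0..1} N'"
    unfolding N'_def using \<alpha>(3) N fuzzy_negation_image
    by (intro continuous_on_compose) auto
  moreover have "\<forall>x\<in>{0..1}. \<forall>y\<in>{0..1}. I x y = U' (N' x) y"
    unfolding U'_def N'_def using I N(1) translate_shift[OF \<alpha>01 \<beta>]
    unfolding fuzzy_negation_def by simp
  ultimately have "UN_representation I U' N'"
    unfolding UN_representation_def using \<alpha>(1) by blast
  moreover have "U' \<alpha> e \<noteq> U \<alpha> e"
    unfolding U'_def using \<alpha>(2) \<alpha>01 \<beta> right_neutral by simp
  ultimately show ?thesis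
    unfolding unique_UN_representation_def using \<alpha>01 neutral_mem by blast
qed

theorem mainTheorem4:
  fixes N :: "real \<Rightarrow> real" and U :: "real \<Rightarrow> real \<Rightarrow> real" and e :: real
    and I :: "real \<Rightarrow> real \<Rightarrow> real"
  assumes "fuzzy_negation N" and "continuous_on {0..1} N"
    and "uninorm U e" and "disjunctive U" and "e \<in> {0<..<1}"
    and "\<forall>x\<in>{0..1}. \<forall>y\<in>{0..1}. I x y = U (N x) y"
  shows "\<not> unique_UN_representation I U N \<longleftrightarrow>
    (\<exists>\<alpha>\<in>{0<..<1}. \<alpha> \<noteq> e \<and>
       continuous_on {0..1} (\<lambda>x. U x \<alpha>) \<and> mono_on {0..1} (\<lambda>x. U x \<alpha>) \<and>
       U 0 \<alpha> = 0 \<and> U 1 \<alpha> = 1)"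
proof -
  have rep: "UN_representation I U N"
    unfolding UN_representation_def using assms by blast
  show ?thesis
    using not_unique_UN_representation_obtains_other_neutral[OF rep assms(3)]
      other_neutral_imp_not_unique_UN_representation[OF rep assms(3)]
    by blast
qed

end
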